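(* Let $V$ be a real vector space of finite even dimension with nondegenerate quadratic form $Q$. Let $\rho$ be a $c$-compatible representation of $\mathbb{C}l(V)$ on a finite-dimensional complex vector space $K$ with nondegenerate hermitian form $(\cdot,\cdot)$. Let $\sigma=\mathrm{Ad}_b\circ c$ be an admissible real structure with $b$ in the complex Clifford group and $b$ real, i.e. $c(b)=b$. (1) If $b^\times=b$, then $(\cdot,\cdot)_b:=(\cdot,\rho(b)^{-1}\cdot)$ is a $\sigma$-compatible Krein product on $K$. (2) If $b^\times=-b$, then $(\cdot,\cdot)_b:=(\cdot,i\rho(b)^{-1}\cdot)$ is a $\sigma$-compatible Krein product on $K$.
   Context: $Cl(V,Q)$ is the real Clifford algebra with $v^2=+Q(v)$, $\mathbb{C}l(V)$ its complexification with complex conjugation $c$; $T$ is the linear antiautomorphism restricting to the identity on $V$; $a^\times=c(T(a))$. A real structure is an involutive antilinear algebra automorphism of $\mathbb{C}l(V)$ stabilizing $V^{\mathbb{C}}$; admissible means commuting with $c$; $\mathrm{Ad}_b(a)=bab^{-1}$; the complex Clifford group is the set of invertible $g$ with $gV^{\mathbb{C}}g^{-1}\subset V^{\mathbb{C}}$. For a real structure $\sigma$, $a^{\times_\sigma}=\sigma(T(a))$. $\rho$ is $c$-compatible if $(\rho(a)\psi,\phi)=(\psi,\rho(a^\times)\phi)$ for all $a,\psi,\phi$. A Krein product is a nondegenerate hermitian form; it is $\sigma$-compatible if $(\rho(a)\psi,\phi)'=(\psi,\rho(a^{\times_\sigma})\phi)'$ for all $a\in\mathbb{C}l(V)$, $\psi,\phi\in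 K$. *)

theory Defs
  imports "HOL-Analysis.Analysis"
begin

definition quadratic_form :: "('v::real_vector \<Rightarrow> real) \<Rightarrow> bool" where
  "quadratic_form Q \<longleftrightarrow>
     (\<forall>r v. Q (r *\<^sub>R v) = r\<^sup>2 * Q v) \<and> bilinear (\<lambda>v w. Q (v + w) - Q v - Q w)"

definition nondegenerate_qf :: "('v::real_vector \<Rightarrow> real) \<Rightarrow> bool" where
  "nondegenerate_qf Q \<longleftrightarrow> (\<forall>w. (\<forall>v. Q (v + w) - Q v - Q w = 0) \<longrightarrow> w = 0)"

definition finite_dim_space :: "'v::real_vector itself \<Rightarrow> bool" where
  "finite_dim_space _ \<longleftrightarrow> (\<exists>S::'v set. finite S \<and> span S = UNIV)"

text \<open>Elements of the free complex algebra on the set V (noncommutative polynomials):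
  finitely supported complex-valued functions on words over V.\<close>

type_synonym 'v fa = "'v list \<Rightarrow> complex"

definition FA :: "'v fa set" where
  "FA = {f. finite {w. f w \<noteq> 0}}"

definition fa_zero :: "'v fa" where "fa_zero = (\<lambda>_. 0)"
definition fa_add :: "'v fa \<Rightarrow> 'v fa \<Rightarrow> 'v fa" where "fa_add f g = (\<lambda>w. f w + g w)"
definition fa_diff :: "'v fa \<Rightarrow> 'v fa \<Rightarrow> 'v fa" where "fa_diff f g = (\<lambda>w. f w - g w)"
definition fa_scale :: "complex \<Rightarrow> 'v fa \<Rightarrow> 'v fa" where "fa_scale z f = (\<lambda>w. z * f w)"
definition fa_mult :: "'v fa \<Rightarrow> 'v fa \<Rightarrow> 'v fa" where
  "fa_mult f g = (\<lambda>w. \<Sum>k\<le>length w. f (take k w) * g (drop k w))"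
definition fa_mon :: "'v list \<Rightarrow> 'v fa" where "fa_mon u = (\<lambda>w. if w = u then 1 else 0)"
definition fa_one :: "'v fa" where "fa_one = fa_mon []"

definition cl_rels :: "('v::real_vector \<Rightarrow> real) \<Rightarrow> 'v fa set" where
  "cl_rels Q =
     (\<lambda>(v, w). fa_diff (fa_diff (fa_mon [v + w]) (fa_mon [v])) (fa_mon [w])) ` UNIV
   \<union> (\<lambda>(r, v). fa_diff (fa_mon [r *\<^sub>R v]) (fa_scale (of_real r) (fa_mon [v]))) ` UNIV
   \<union> (\<lambda>v. fa_diff (fa_mon [v, v]) (fa_scale (of_real (Q v)) fa_one)) ` UNIV"

inductive_set cl_ideal :: "('v::real_vector \<Rightarrow> real) \<Rightarrow> 'v fa set" for Q where
  zero: "fa_zero \<in> cl_ideal Q"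
| add: "x \<in> cl_ideal Q \<Longrightarrow> y \<in> cl_ideal Q \<Longrightarrow> fa_add x y \<in> cl_ideal Q"
| scale: "x \<in> cl_ideal Q \<Longrightarrow> fa_scale z x \<in> cl_ideal Q"
| gen: "r \<in> cl_rels Q \<Longrightarrow> fa_mult (fa_mult (fa_mon u) r) (fa_mon w) \<in> cl_ideal Q"

text \<open>Equality in the quotient algebra Cl(V)^C = FA / cl_ideal Q.\<close>
definition cl_eq :: "('v::real_vector \<Rightarrow> real) \<Rightarrow> 'v fa \<Rightarrow> 'v fa \<Rightarrow> bool" where
  "cl_eq Q a b \<longleftrightarrow> fa_diff a b \<in> cl_ideal Q"

text \<open>Complex conjugation c, the transpose T (reversal, identity on V), and a^x = c(T(a)).\<close>
definition cl_conj :: "'v fa \<Rightarrow> 'v fa" where "cl_conj f = (\<lambda>w. cnj (f w))"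
definition cl_T :: "'v fa \<Rightarrow> 'v fa" where "cl_T f = (\<lambda>w. f (rev w))"
definition cl_cross :: "'v fa \<Rightarrow> 'v fa" where "cl_cross a = cl_conj (cl_T a)"

definition VC :: "'v fa set" where
  "VC = {f \<in> FA. \<forall>w. f w \<noteq> 0 \<longrightarrow> length w = 1}"

definition cl_is_inverse :: "('v::real_vector \<Rightarrow> real) \<Rightarrow> 'v fa \<Rightarrow> 'v fa \<Rightarrow> bool" where
  "cl_is_inverse Q a a' \<longleftrightarrow> a' \<in> FA \<and> cl_eq Q (fa_mult a a') fa_one \<and> cl_eq Q (fa_mult a' a) fa_one"

definition cl_invertible :: "('v::real_vector \<Rightarrow> real) \<Rightarrow> 'v fa \<Rightarrow> bool" where
  "cl_invertible Q a \<longleftrightarrow> a \<in> FA \<and> (\<exists>a'. cl_is_inverse Q a a')"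

definition cl_inv :: "('v::real_vector \<Rightarrow> real) \<Rightarrow> 'v fa \<Rightarrow> 'v fa" where
  "cl_inv Q a = (SOME a'. cl_is_inverse Q a a')"

definition cl_clifford_group :: "('v::real_vector \<Rightarrow> real) \<Rightarrow> 'v fa set" where
  "cl_clifford_group Q = {g. cl_invertible Q g \<and>
      (\<forall>v\<in>VC. \<exists>w\<in>VC. cl_eq Q (fa_mult (fa_mult g v) (cl_inv Q g)) w)}"

definition Ad :: "('v::real_vector \<Rightarrow> real) \<Rightarrow> 'v fa \<Rightarrow> 'v fa \<Rightarrow> 'v fa" where
  "Ad Q b a = fa_mult (fa_mult b a) (cl_inv Q b)"

text \<open>A real structure: an involutive antilinear (unital) algebra automorphism of Cl(V)^C
  stabilizing V^C, given on representatives and well defined modulo the ideal.\<close>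
definition real_structure :: "('v::real_vector \<Rightarrow> real) \<Rightarrow> ('v fa \<Rightarrow> 'v fa) \<Rightarrow> bool" where
  "real_structure Q \<sigma> \<longleftrightarrow>
     (\<forall>a\<in>FA. \<sigma> a \<in> FA) \<and>
     (\<forall>a\<in>FA. \<forall>a'\<in>FA. cl_eq Q a a' \<longrightarrow> cl_eq Q (\<sigma> a) (\<sigma> a')) \<and>
     (\<forall>a\<in>FA. \<forall>a'\<in>FA. cl_eq Q (\<sigma> (fa_add a a')) (fa_add (\<sigma> a) (\<sigma> a'))) \<and>
     (\<forall>z. \<forall>a\<in>FA. cl_eq Q (\<sigma> (fa_scale z a)) (fa_scale (cnj z) (\<sigma> a))) \<and>
     (\<forall>a\<in>FA. \<forall>a'\<in>FA. cl_eq Q (\<sigma> (fa_mult a a')) (fa_mult (\<sigma> a) (\<sigma> a'))) \<and>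
     cl_eq Q (\<sigma> fa_one) fa_one \<and>
     (\<forall>a\<in>FA. cl_eq Q (\<sigma> (\<sigma> a)) a) \<and>
     (\<forall>v\<in>VC. \<exists>w\<in>VC. cl_eq Q (\<sigma> v) w)"

definition admissible :: "('v::real_vector \<Rightarrow> real) \<Rightarrow> ('v fa \<Rightarrow> 'v fa) \<Rightarrow> bool" where
  "admissible Q \<sigma> \<longleftrightarrow> (\<forall>a\<in>FA. cl_eq Q (\<sigma> (cl_conj a)) (cl_conj (\<sigma> a)))"

definition clinear_map :: "(complex^'k \<Rightarrow> complex^'k) \<Rightarrow> bool" where
  "clinear_map f \<longleftrightarrow> (\<forall>x y. f (x + y) = f x + f y) \<and> (\<forall>z x. f (z *s x) = z *s f x)"

definition cl_representation ::
  "('v::real_vector \<Rightarrow> real) \<Rightarrow> ('v fa \<Rightarrow> complex^'k \<Rightarrow> complex^'k) \<Rightarrow> bool" where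
  "cl_representation Q \<rho> \<longleftrightarrow>
     (\<forall>a\<in>FA. clinear_map (\<rho> a)) \<and>
     (\<forall>a\<in>FA. \<forall>a'\<in>FA. cl_eq Q a a' \<longrightarrow> \<rho> a = \<rho> a') \<and>
     (\<forall>a\<in>FA. \<forall>a'\<in>FA. \<rho> (fa_add a a') = (\<lambda>\<psi>. \<rho> a \<psi> + \<rho> a' \<psi>)) \<and>
     (\<forall>z. \<forall>a\<in>FA. \<rho> (fa_scale z a) = (\<lambda>\<psi>. z *s \<rho> a \<psi>)) \<and>
     (\<forall>a\<in>FA. \<forall>a'\<in>FA. \<rho> (fa_mult a a') = \<rho> a \<circ> \<rho> a') \<and>
     \<rho> fa_one = id"

definition hermitian_form :: "(complex^'k \<Rightarrow> complex^'k \<Rightarrow> complex) \<Rightarrow> bool" where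
  "hermitian_form h \<longleftrightarrow>
     (\<forall>x y z. h x (y + z) = h x y + h x z) \<and>
     (\<forall>c x y. h x (c *s y) = c * h x y) \<and>
     (\<forall>x y. h y x = cnj (h x y))"

definition nondegenerate_form :: "(complex^'k \<Rightarrow> complex^'k \<Rightarrow> complex) \<Rightarrow> bool" where
  "nondegenerate_form h \<longleftrightarrow> (\<forall>y. (\<forall>x. h x y = 0) \<longrightarrow> y = 0)"

definition krein_product :: "(complex^'k \<Rightarrow> complex^'k \<Rightarrow> complex) \<Rightarrow> bool" where
  "krein_product h \<longleftrightarrow> hermitian_form h \<and> nondegenerate_form h"

definition c_compatible ::
  "('v fa \<Rightarrow> complex^'k \<Rightarrow> complex^'k) \<Rightarrow> (complex^'k \<Rightarrow> complex^'k \<Rightarrow> complex) \<Rightarrow> bool" where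
  "c_compatible \<rho> h \<longleftrightarrow> (\<forall>a\<in>FA. \<forall>\<psi> \<phi>. h (\<rho> a \<psi>) \<phi> = h \<psi> (\<rho> (cl_cross a) \<phi>))"

text \<open>a^x_sigma = \<sigma>(T(a)); \<sigma>-compatible Krein product.\<close>
definition sigma_compatible_krein ::
  "('v fa \<Rightarrow> complex^'k \<Rightarrow> complex^'k) \<Rightarrow> ('v fa \<Rightarrow> 'v fa) \<Rightarrow>
   (complex^'k \<Rightarrow> complex^'k \<Rightarrow> complex) \<Rightarrow> bool" where
  "sigma_compatible_krein \<rho> \<sigma> h' \<longleftrightarrow>
     krein_product h' \<and> (\<forall>a\<in>FA. \<forall>\<psi> \<phi>. h' (\<rho> a \<psi>) \<phi> = h' \<psi> (\<rho> (\<sigma> (cl_T a)) \<phi>))"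

end

theory Submission
  imports Defs
begin

text \<open>
  Write \<open>P = \<rho>(b)\<close>. By \<open>c\<close>-compatibility, \<open>b\<^sup>\<times> = \<epsilon> b\<close> with \<open>\<epsilon> = \<plusminus>1\<close> makes \<open>P\<close>
  \<open>\<epsilon>\<close>-self-adjoint for \<open>(\<cdot>,\<cdot>)\<close>, so \<open>(\<psi>,\<phi>) \<mapsto> (\<psi>, z P\<^sup>-\<^sup>1\<phi>)\<close> is hermitian as soon as
  \<open>cnj z = \<epsilon> z\<close> (take \<open>z = 1\<close> resp. \<open>z = \<i>\<close>), and nondegenerate because \<open>P\<close> is invertible.
  Since \<open>\<sigma>(T a) = b a\<^sup>\<times> b\<^sup>-\<^sup>1\<close> already on representatives, \<open>\<rho>(\<sigma>(T a)) = P \<rho>(a\<^sup>\<times>) P\<^sup>-\<^sup>1\<close>,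
  and the adjoint relation of \<open>\<rho>(a)\<close> for the twisted form is that for \<open>(\<cdot>,\<cdot>)\<close> conjugated by \<open>P\<close>.
\<close>

lemma fa_mult_in_FA:
  assumes "f \<in> FA" "g \<in> FA" shows "fa_mult f g \<in> FA"
proof -
  let ?S = "(\<lambda>(u, v). u @ v) ` ({w. f w \<noteq> 0} \<times> {w. g w \<noteq> 0})"
  have "{w. fa_mult f g w \<noteq> 0} \<subseteq> ?S"
  proof
    fix w assume "w \<in> {w. fa_mult f g w \<noteq> 0}"
    then have "(\<Sum>k\<le>length w. f (take k w) * g (drop k w)) \<noteq> 0"
      by (simp add: fa_mult_def)
    then obtain k where "f (take k w) * g (drop k w) \<noteq> 0"
      by (meson sum.neutral)
    then have "f (take k w) \<noteq> 0" "g (drop k w) \<noteq> 0" by auto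
    moreover have "w = take k w @ drop k w" by simp
    ultimately show "w \<in> ?S"
      by (metis (mono_tags, lifting) SigmaI case_prod_conv image_eqI mem_Collect_eq)
  qed
  moreover have "finite ?S" using assms by (simp add: FA_def)
  ultimately show ?thesis unfolding FA_def using finite_subset by blast
qed

lemma cl_cross_in_FA:
  assumes "f \<in> FA" shows "cl_cross f \<in> FA"
proof -
  have "{w. cl_cross f w \<noteq> 0} = rev ` {w. f w \<noteq> 0}"
    by (auto simp: cl_cross_def cl_conj_def cl_T_def image_iff) (metis rev_rev_ident)
  then show ?thesis using assms by (simp add: FA_def)
qed

lemma fa_scale_in_FA:
  assumes "f \<in> FA" shows "fa_scale z f \<in> FA"
proof -
  have "{w. fa_scale z f w \<noteq> 0} \<subseteq> {w. f w \<noteq> 0}" by (auto simp: fa_scale_def)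
  then show ?thesis using assms unfolding FA_def using finite_subset by blast
qed

lemma fa_one_in_FA: "fa_one \<in> FA"
proof -
  have "{w. fa_one w \<noteq> 0} \<subseteq> {[]}" by (auto simp: fa_one_def fa_mon_def)
  then show ?thesis unfolding FA_def using finite_subset by blast
qed

lemma fa_scale_one [simp]: "fa_scale 1 f = f"
  by (simp add: fa_scale_def)

lemma cl_inv_is_inverse:
  assumes "cl_invertible Q b" shows "cl_is_inverse Q b (cl_inv Q b)"
  using assms unfolding cl_invertible_def cl_inv_def by (simp add: someI_ex)

lemma cl_invertible_in_FA: "cl_invertible Q b \<Longrightarrow> b \<in> FA"
  by (simp add: cl_invertible_def)

lemma cl_inv_in_FA: "cl_invertible Q b \<Longrightarrow> cl_inv Q b \<in> FA"
  using cl_inv_is_inverse cl_is_inverse_def by blast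

lemma
  assumes "cl_representation Q \<rho>"
  shows cl_representation_clinear: "a \<in> FA \<Longrightarrow> clinear_map (\<rho> a)"
    and cl_representation_cong: "\<lbrakk>a \<in> FA; a' \<in> FA; cl_eq Q a a'\<rbrakk> \<Longrightarrow> \<rho> a = \<rho> a'"
    and cl_representation_scale: "a \<in> FA \<Longrightarrow> \<rho> (fa_scale z a) = (\<lambda>\<psi>. z *s \<rho> a \<psi>)"
    and cl_representation_mult: "\<lbrakk>a \<in> FA; a' \<in> FA\<rbrakk> \<Longrightarrow> \<rho> (fa_mult a a') = \<rho> a \<circ> \<rho> a'"
    and cl_representation_one: "\<rho> fa_one = id"
  using assms unfolding cl_representation_def by blast+

lemma cl_representation_cl_inv:
  assumes rep: "cl_representation Q \<rho>" and b: "cl_invertible Q b"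
  shows "\<rho> b \<circ> \<rho> (cl_inv Q b) = id" and "\<rho> (cl_inv Q b) \<circ> \<rho> b = id"
proof -
  have bFA: "b \<in> FA" and b'FA: "cl_inv Q b \<in> FA"
    using cl_invertible_in_FA[OF b] cl_inv_in_FA[OF b] .
  have bb': "cl_eq Q (fa_mult b (cl_inv Q b)) fa_one"
    and b'b: "cl_eq Q (fa_mult (cl_inv Q b) b) fa_one"
    using cl_inv_is_inverse[OF b] by (simp_all add: cl_is_inverse_def)
  show "\<rho> b \<circ> \<rho> (cl_inv Q b) = id"
    using cl_representation_cong[OF rep fa_mult_in_FA[OF bFA b'FA] fa_one_in_FA bb']
    by (simp add: cl_representation_mult[OF rep bFA b'FA] cl_representation_one[OF rep])
  show "\<rho> (cl_inv Q b) \<circ> \<rho> b = id"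
    using cl_representation_cong[OF rep fa_mult_in_FA[OF b'FA bFA] fa_one_in_FA b'b]
    by (simp add: cl_representation_mult[OF rep b'FA bFA] cl_representation_one[OF rep])
qed

lemma cl_representation_inv:
  assumes "cl_representation Q \<rho>" "cl_invertible Q b"
  shows "inv (\<rho> b) = \<rho> (cl_inv Q b)"
  using inv_unique_comp cl_representation_cl_inv[OF assms] by blast

lemma cl_representation_Ad_conj_T:
  assumes "cl_representation Q \<rho>" "cl_invertible Q b" "a \<in> FA"
  shows "\<rho> ((Ad Q b \<circ> cl_conj) (cl_T a)) = \<rho> b \<circ> \<rho> (cl_cross a) \<circ> \<rho> (cl_inv Q b)"
proof -
  have "b \<in> FA" "cl_inv Q b \<in> FA" "cl_cross a \<in> FA"
    using cl_invertible_in_FA cl_inv_in_FA cl_cross_in_FA assms(2,3) by blast+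
  moreover have "(Ad Q b \<circ> cl_conj) (cl_T a) = fa_mult (fa_mult b (cl_cross a)) (cl_inv Q b)"
    by (simp add: Ad_def cl_cross_def)
  ultimately show ?thesis
    by (simp add: cl_representation_mult[OF assms(1)] fa_mult_in_FA)
qed

lemma c_compatible_cross_eigen:
  assumes rep: "cl_representation Q \<rho>" and compat: "c_compatible \<rho> h"
    and herm: "hermitian_form h" and bFA: "b \<in> FA"
    and cross: "cl_eq Q (cl_cross b) (fa_scale \<epsilon> b)"
  shows "h (\<rho> b u) v = \<epsilon> * h u (\<rho> b v)"
proof -
  have "\<rho> (cl_cross b) = \<rho> (fa_scale \<epsilon> b)"
    using cl_representation_cong[OF rep cl_cross_in_FA[OF bFA] fa_scale_in_FA[OF bFA] cross] .
  also have "\<dots> = (\<lambda>\<psi>. \<epsilon> *s \<rho> b \<psi>)"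
    using cl_representation_scale[OF rep bFA] .
  finally have cross_v: "\<rho> (cl_cross b) v = \<epsilon> *s \<rho> b v" by simp
  have "h (\<rho> b u) v = h u (\<rho> (cl_cross b) v)"
    using compat bFA unfolding c_compatible_def by blast
  also have "\<dots> = \<epsilon> * h u (\<rho> b v)"
    using herm unfolding cross_v hermitian_form_def by blast
  finally show ?thesis .
qed

lemma krein_product_twisted_inverse:
  assumes herm: "hermitian_form h" and nondeg: "nondegenerate_form h"
    and PB: "\<And>x. P (B x) = x" and B: "clinear_map B"
    and adj: "\<And>u v. h (P u) v = \<epsilon> * h u (P v)"
    and z: "cnj z = \<epsilon> * z" "z \<noteq> 0"
  shows "krein_product (\<lambda>\<psi> \<phi>. h \<psi> (z *s B \<phi>))"
proof -
  have hadd: "\<And>x y w. h x (y + w) = h x y + h x w"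
    and hsc: "\<And>c x y. h x (c *s y) = c * h x y"
    and hsym: "\<And>x y. h y x = cnj (h x y)"
    using herm unfolding hermitian_form_def by blast+
  have Badd: "\<And>x y. B (x + y) = B x + B y" and Bsc: "\<And>c x. B (c *s x) = c *s B x"
    using B by (auto simp: clinear_map_def)
  have "hermitian_form (\<lambda>\<psi> \<phi>. h \<psi> (z *s B \<phi>))"
    unfolding hermitian_form_def
  proof (intro conjI allI)
    fix x y
    have "h y (B x) = h (P (B y)) (B x)" by (simp only: PB)
    also have "\<dots> = \<epsilon> * h (B y) x" using adj[of "B y" "B x"] by (simp only: PB)
    also have "\<dots> = \<epsilon> * cnj (h x (B y))" using hsym[of x "B y"] by simp
    finally show "h y (z *s B x) = cnj (h x (z *s B y))"
      using z(1) by (simp add: hsc)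
  next
    fix x y w
    show "h x (z *s B (y + w)) = h x (z *s B y) + h x (z *s B w)"
      by (simp only: Badd vector_add_ldistrib hadd)
  next
    fix c x y
    show "h x (z *s B (c *s y)) = c * h x (z *s B y)"
      by (simp add: Bsc hsc vector_smult_assoc)
  qed
  moreover have "nondegenerate_form (\<lambda>\<psi> \<phi>. h \<psi> (z *s B \<phi>))"
    unfolding nondegenerate_form_def
  proof (intro allI impI)
    fix y assume "\<forall>x. h x (z *s B y) = 0"
    then have "B y = 0" using nondeg z(2) by (simp add: hsc nondegenerate_form_def)
    moreover have "B 0 = 0" using Bsc[of 0 0] by simp
    ultimately show "y = 0" by (metis PB)
  qed
  ultimately show ?thesis by (simp add: krein_product_def)
qed

lemma sigma_compatible_krein_twisted:
  assumes rep: "cl_representation Q \<rho>" and compat: "c_compatible \<rho> h"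
    and herm: "hermitian_form h" and nondeg: "nondegenerate_form h"
    and b: "cl_invertible Q b"
    and cross: "cl_eq Q (cl_cross b) (fa_scale \<epsilon> b)"
    and z: "cnj z = \<epsilon> * z" "z \<noteq> 0"
  shows "sigma_compatible_krein \<rho> (Ad Q b \<circ> cl_conj) (\<lambda>\<psi> \<phi>. h \<psi> (z *s inv (\<rho> b) \<phi>))"
proof -
  let ?P = "\<rho> b" and ?B = "\<rho> (cl_inv Q b)"
  have bFA: "b \<in> FA" and b'FA: "cl_inv Q b \<in> FA"
    using cl_invertible_in_FA[OF b] cl_inv_in_FA[OF b] .
  have PB: "\<And>x. ?P (?B x) = x" and BP: "\<And>x. ?B (?P x) = x"
    using cl_representation_cl_inv[OF rep b] by (metis comp_apply id_apply)+
  have krein: "krein_product (\<lambda>\<psi> \<phi>. h \<psi> (z *s ?B \<phi>))"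
    using krein_product_twisted_inverse[OF herm nondeg PB cl_representation_clinear[OF rep b'FA] _ z]
      c_compatible_cross_eigen[OF rep compat herm bFA cross] by blast
  have "h (\<rho> a \<psi>) (z *s ?B \<phi>) = h \<psi> (z *s ?B (\<rho> ((Ad Q b \<circ> cl_conj) (cl_T a)) \<phi>))"
    if aFA: "a \<in> FA" for a \<psi> \<phi>
  proof -
    have "h (\<rho> a \<psi>) (z *s ?B \<phi>) = h \<psi> (\<rho> (cl_cross a) (z *s ?B \<phi>))"
      using compat aFA by (simp add: c_compatible_def)
    also have "\<dots> = h \<psi> (z *s \<rho> (cl_cross a) (?B \<phi>))"
      using cl_representation_clinear[OF rep cl_cross_in_FA[OF aFA]] by (simp add: clinear_map_def)
    also have "\<dots> = h \<psi> (z *s ?B (\<rho> ((Ad Q b \<circ> cl_conj) (cl_T a)) \<phi>))"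
      using cl_representation_Ad_conj_T[OF rep b aFA] BP by simp
    finally show ?thesis .
  qed
  with krein show ?thesis
    by (simp add: sigma_compatible_krein_def cl_representation_inv[OF rep b])
qed

theorem proposition9:
  fixes Q :: "'v::real_vector \<Rightarrow> real"
    and \<rho> :: "'v fa \<Rightarrow> complex^'k \<Rightarrow> complex^'k"
    and h :: "complex^'k \<Rightarrow> complex^'k \<Rightarrow> complex"
    and b :: "'v fa"
  assumes "finite_dim_space TYPE('v)"
    and "even (dim (UNIV :: 'v set))"
    and "quadratic_form Q"
    and "nondegenerate_qf Q"
    and "cl_representation Q \<rho>"
    and "c_compatible \<rho> h"
    and "hermitian_form h"
    and "nondegenerate_form h"
    and "b \<in> cl_clifford_group Q"
    and "real_structure Q (Ad Q b \<circ> cl_conj)"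
    and "admissible Q (Ad Q b \<circ> cl_conj)"
    and "cl_eq Q (cl_conj b) b"
  shows "(cl_eq Q (cl_cross b) b \<longrightarrow>
            sigma_compatible_krein \<rho> (Ad Q b \<circ> cl_conj) (\<lambda>\<psi> \<phi>. h \<psi> (inv (\<rho> b) \<phi>)))
       \<and> (cl_eq Q (cl_cross b) (fa_scale (-1) b) \<longrightarrow>
            sigma_compatible_krein \<rho> (Ad Q b \<circ> cl_conj) (\<lambda>\<psi> \<phi>. h \<psi> (\<i> *s inv (\<rho> b) \<phi>)))"
proof -
  have b: "cl_invertible Q b" using assms(9) by (simp add: cl_clifford_group_def)
  note twisted = sigma_compatible_krein_twisted[OF assms(5-8) b]
  show ?thesis
    using twisted[of 1 1] twisted[of "-1" \<i>] by simp
qed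

end
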